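(* Suppose $A$ is a simple quotient algebra of $\mathcal{A}(D)$. If $G$ induces a group of automorphisms on $A$ (i.e., the action of $G$ on $\mathcal{A}(D)$ descends to $A$), then $A$ is isomorphic to $\mathcal{A}(D)/\mathcal{V}(D)$.
   Context: Let $G$ be a group generated by a conjugacy class $D$ of involutions such that for all $d,e\in D$ the order of $de$ is $1$, $2$ or $3$. Lines of the Fischer space on $D$ are triples $\{d,e,d^e\}$ with $d,e\in D$ non-commuting. $\mathcal{A}(D)$ is the $\mathbb{F}_2$-vector space with basis $D$, with bilinear product determined by $d*e=d+e+f$ if $\{d,e,f\}$ is a line and $d*e=0$ otherwise; $G$ acts on it by linear extension of conjugation. The bilinear form $\langle\cdot,\cdot\rangle$ is determined by $\langle d,e\rangle=1$ if $d,e$ do not commute and $0$ otherwise; $\mathcal{V}(D)$ is its radical. *)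

theory Defs
  imports "HOL-Algebra.Algebra" "HOL-Library.Z2"
begin

text \<open>Vectors of the F_2-space with basis D are finitely supported functions
  'g => bit vanishing outside D.\<close>

definition supp :: "('g \<Rightarrow> bit) \<Rightarrow> 'g set" where
  "supp v = {x. v x \<noteq> 0}"

definition AD :: "'g set \<Rightarrow> ('g \<Rightarrow> bit) set" where
  "AD D = {v. finite (supp v) \<and> supp v \<subseteq> D}"

definition vadd :: "('g \<Rightarrow> bit) \<Rightarrow> ('g \<Rightarrow> bit) \<Rightarrow> ('g \<Rightarrow> bit)" where
  "vadd v w = (\<lambda>x. v x + w x)"

definition vzero :: "'g \<Rightarrow> bit" where
  "vzero = (\<lambda>_. 0)"

definition commutes :: "('g, 'b) monoid_scheme \<Rightarrow> 'g \<Rightarrow> 'g \<Rightarrow> bool" where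
  "commutes G d e \<longleftrightarrow> d \<otimes>\<^bsub>G\<^esub> e = e \<otimes>\<^bsub>G\<^esub> d"

definition bprod :: "('g, 'b) monoid_scheme \<Rightarrow> 'g \<Rightarrow> 'g \<Rightarrow> ('g \<Rightarrow> bit)" where
  "bprod G d e = (if commutes G d e then vzero
     else (\<lambda>x. if x \<in> {d, e, inv\<^bsub>G\<^esub> e \<otimes>\<^bsub>G\<^esub> d \<otimes>\<^bsub>G\<^esub> e} then 1 else 0))"

definition amult :: "('g, 'b) monoid_scheme \<Rightarrow> ('g \<Rightarrow> bit) \<Rightarrow> ('g \<Rightarrow> bit) \<Rightarrow> ('g \<Rightarrow> bit)" where
  "amult G v w = (\<lambda>x. \<Sum>d\<in>supp v. \<Sum>e\<in>supp w. v d * w e * bprod G d e x)"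

definition bform :: "('g, 'b) monoid_scheme \<Rightarrow> ('g \<Rightarrow> bit) \<Rightarrow> ('g \<Rightarrow> bit) \<Rightarrow> bit" where
  "bform G v w = (\<Sum>d\<in>supp v. \<Sum>e\<in>supp w. v d * w e * (if commutes G d e then 0 else 1))"

definition radical :: "('g, 'b) monoid_scheme \<Rightarrow> 'g set \<Rightarrow> ('g \<Rightarrow> bit) set" where
  "radical G D = {v \<in> AD D. \<forall>w \<in> AD D. bform G v w = 0}"

text \<open>Linear extension of conjugation: the basis vector d is mapped to g d g^-1.\<close>
definition act :: "('g, 'b) monoid_scheme \<Rightarrow> 'g \<Rightarrow> ('g \<Rightarrow> bit) \<Rightarrow> ('g \<Rightarrow> bit)" where
  "act G g v = (\<lambda>x. if x \<in> carrier G then v (inv\<^bsub>G\<^esub> g \<otimes>\<^bsub>G\<^esub> x \<otimes>\<^bsub>G\<^esub> g) else 0)"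

text \<open>Ideals of the (commutative) algebra A(D); over F_2 subspaces are the
  additively closed subsets containing 0.\<close>
definition is_ideal :: "('g, 'b) monoid_scheme \<Rightarrow> 'g set \<Rightarrow> ('g \<Rightarrow> bit) set \<Rightarrow> bool" where
  "is_ideal G D I \<longleftrightarrow> I \<subseteq> AD D \<and> vzero \<in> I
     \<and> (\<forall>v\<in>I. \<forall>w\<in>I. vadd v w \<in> I)
     \<and> (\<forall>v\<in>I. \<forall>w\<in>AD D. amult G v w \<in> I \<and> amult G w v \<in> I)"

text \<open>A(D)/I is a simple algebra: it has nonzero product and its only ideals
  are 0 and itself (ideals of A(D)/I correspond to ideals of A(D) containing I).\<close>
definition simple_quotient :: "('g, 'b) monoid_scheme \<Rightarrow> 'g set \<Rightarrow> ('g \<Rightarrow> bit) set \<Rightarrow> bool" where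
  "simple_quotient G D I \<longleftrightarrow> is_ideal G D I
     \<and> (\<exists>v\<in>AD D. \<exists>w\<in>AD D. amult G v w \<notin> I)
     \<and> (\<forall>J. is_ideal G D J \<and> I \<subseteq> J \<longrightarrow> J = I \<or> J = AD D)"

text \<open>The action of G on A(D) descends to A(D)/I.\<close>
definition G_invariant :: "('g, 'b) monoid_scheme \<Rightarrow> ('g \<Rightarrow> bit) set \<Rightarrow> bool" where
  "G_invariant G I \<longleftrightarrow> (\<forall>g\<in>carrier G. \<forall>v\<in>I. act G g v \<in> I)"

text \<open>A(D)/I and A(D)/J are isomorphic F_2-algebras, written on representatives:
  psi induces a well-defined, injective, surjective, additive and multiplicative
  map from A(D)/I to A(D)/J (over F_2, additivity gives linearity).\<close>
definition quot_iso :: "('g, 'b) monoid_scheme \<Rightarrow> 'g set \<Rightarrow> ('g \<Rightarrow> bit) set \<Rightarrow> ('g \<Rightarrow> bit) set \<Rightarrow> bool" where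
  "quot_iso G D I J \<longleftrightarrow> (\<exists>\<psi>. \<psi> ` AD D \<subseteq> AD D
     \<and> (\<forall>v\<in>AD D. \<forall>w\<in>AD D. vadd (\<psi> v) (\<psi> w) \<in> J \<longleftrightarrow> vadd v w \<in> I)
     \<and> (\<forall>u\<in>AD D. \<exists>v\<in>AD D. vadd (\<psi> v) u \<in> J)
     \<and> (\<forall>v\<in>AD D. \<forall>w\<in>AD D. vadd (\<psi> (vadd v w)) (vadd (\<psi> v) (\<psi> w)) \<in> J)
     \<and> (\<forall>v\<in>AD D. \<forall>w\<in>AD D. vadd (\<psi> (amult G v w)) (amult G (\<psi> v) (\<psi> w)) \<in> J))"

end

theory Submission
  imports Defs
begin

text \<open>Everything rests on the formula \<open>d * v = \<langle>v,d\<rangle> d + v + v\<^sup>d\<close> for \<open>d \<in> D\<close>,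
  which follows from the braid relation \<open>e\<^sup>d = d\<^sup>e\<close> for non-commuting \<open>d, e \<in> D\<close>.
  If a \<open>G\<close>-invariant ideal contains some \<open>v\<close> with \<open>\<langle>v,d\<rangle> \<noteq> 0\<close>, the formula puts
  \<open>d\<close> into the ideal, hence all of the conjugacy class \<open>D\<close>, hence everything. So every
  proper invariant ideal lies in \<open>V(D)\<close>. The same formula shows that \<open>V(D)\<close>, being
  invariant, is an ideal; it is proper because the product is nonzero. Simplicity of
  the quotient then forces the ideal to be \<open>V(D)\<close> itself.\<close>

declare mult_bit_eq_and[simp del] add_bit_eq_xor[simp del]

lemma bit_add_self [simp]: "(x::bit) + x = 0"
  by (cases x) simp_all

lemma vadd_self [simp]: "vadd v v = vzero"
  by (simp add: vadd_def vzero_def)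

lemma supp_vzero [simp]: "supp vzero = {}"
  by (simp add: supp_def vzero_def)

lemma supp_vadd: "supp (vadd v w) \<subseteq> supp v \<union> supp w"
  by (auto simp: supp_def vadd_def)

lemma in_supp_eq_1: "d \<in> supp v \<Longrightarrow> v d = 1"
  by (simp add: supp_def)

lemma vadd_AD: "v \<in> AD D \<Longrightarrow> w \<in> AD D \<Longrightarrow> vadd v w \<in> AD D"
  unfolding AD_def using supp_vadd[of v w] by (auto intro: finite_subset)

definition basis_vec :: "'g \<Rightarrow> 'g \<Rightarrow> bit" where
  "basis_vec a = (\<lambda>x. if x = a then 1 else 0)"

lemma supp_basis_vec [simp]: "supp (basis_vec a) = {a}"
  by (auto simp: supp_def basis_vec_def)

lemma basis_vec_AD: "a \<in> D \<Longrightarrow> basis_vec a \<in> AD D"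
  by (simp add: AD_def)

lemma sum_basis_vec_supp: "finite (supp v) \<Longrightarrow> (\<Sum>f\<in>supp v. basis_vec f x) = v x"
  unfolding basis_vec_def by (auto simp: sum.delta supp_def)

lemma sum_vectors_closed:
  assumes "finite S" "vzero \<in> R" "\<And>a b. a \<in> R \<Longrightarrow> b \<in> R \<Longrightarrow> vadd a b \<in> R"
    "\<And>e. e \<in> S \<Longrightarrow> f e \<in> R"
  shows "(\<lambda>x. \<Sum>e\<in>S. f e x) \<in> R"
  using assms(1,4)
proof (induction S rule: finite_induct)
  case empty
  then show ?case using assms(2) by (simp add: vzero_def)
next
  case (insert a S)
  have "(\<lambda>x. \<Sum>e\<in>insert a S. f e x) = vadd (f a) (\<lambda>x. \<Sum>e\<in>S. f e x)"
    using insert by (simp add: vadd_def)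
  then show ?case using insert assms(3) by auto
qed

lemma AD_subset_if_basis_vecs:
  assumes "vzero \<in> R" "\<And>a b. a \<in> R \<Longrightarrow> b \<in> R \<Longrightarrow> vadd a b \<in> R"
    "\<And>d. d \<in> D \<Longrightarrow> basis_vec d \<in> R"
  shows "AD D \<subseteq> R"
proof
  fix u assume u: "u \<in> AD D"
  then have "(\<lambda>x. \<Sum>f\<in>supp u. basis_vec f x) \<in> R"
    using assms by (intro sum_vectors_closed) (auto simp: AD_def)
  moreover have "(\<lambda>x. \<Sum>f\<in>supp u. basis_vec f x) = u"
    using u by (simp add: AD_def sum_basis_vec_supp)
  ultimately show "u \<in> R" by simp
qed

lemma amult_basis_vec_left:
  "amult G (basis_vec d) v x = (\<Sum>f\<in>supp v. v f * bprod G d f x)"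
  unfolding amult_def supp_basis_vec by (simp add: basis_vec_def)

lemma amult_expand_left:
  "amult G w v x = (\<Sum>e\<in>supp w. w e * amult G (basis_vec e) v x)"
  by (simp only: amult_basis_vec_left) (simp add: amult_def sum_distrib_left mult_ac)

lemma amult_eq_vzero_if_all_commute:
  assumes "v \<in> AD D" "w \<in> AD D" "\<And>d e. d \<in> D \<Longrightarrow> e \<in> D \<Longrightarrow> commutes G d e"
  shows "amult G v w = vzero"
proof -
  have "\<forall>d\<in>supp v. \<forall>e\<in>supp w. bprod G d e = vzero"
    using assms by (auto simp: AD_def bprod_def)
  then show ?thesis unfolding amult_def by (intro ext) (simp add: vzero_def)
qed

lemma quot_iso_refl:
  assumes "vzero \<in> I"
  shows "quot_iso G D I I"
  unfolding quot_iso_def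
proof (rule exI[of _ "\<lambda>v. v"], intro conjI ballI)
  fix u assume "u \<in> AD D"
  then show "\<exists>v\<in>AD D. vadd v u \<in> I" using assms by (intro bexI[of _ u]) auto
qed (use assms in simp_all)


subsection \<open>The bilinear form\<close>

definition bform_elem :: "('g, 'b) monoid_scheme \<Rightarrow> 'g \<Rightarrow> 'g \<Rightarrow> bit" where
  "bform_elem G d e = (if commutes G d e then 0 else 1)"

definition bform_left :: "('g, 'b) monoid_scheme \<Rightarrow> ('g \<Rightarrow> bit) \<Rightarrow> 'g \<Rightarrow> bit" where
  "bform_left G v e = (\<Sum>d\<in>supp v. v d * bform_elem G d e)"

lemma bform_elem_sym: "bform_elem G d e = bform_elem G e d"
  by (auto simp: bform_elem_def commutes_def)

lemma bform_left_basis_vec: "bform_left G (basis_vec d) e = bform_elem G d e"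
  unfolding bform_left_def supp_basis_vec by (simp add: basis_vec_def)

lemma bform_eq_sum_bform_left: "bform G v w = (\<Sum>e\<in>supp w. w e * bform_left G v e)"
  unfolding bform_def bform_left_def bform_elem_def
  by (subst sum.swap) (simp add: sum_distrib_left mult_ac)

lemma bform_left_superset:
  assumes "finite A" "supp v \<subseteq> A"
  shows "bform_left G v e = (\<Sum>d\<in>A. v d * bform_elem G d e)"
  unfolding bform_left_def
  by (rule sum.mono_neutral_left) (use assms in \<open>auto simp: supp_def\<close>)

lemma bform_left_vadd:
  assumes "finite (supp v)" "finite (supp w)"
  shows "bform_left G (vadd v w) e = bform_left G v e + bform_left G w e"
proof -
  let ?A = "supp v \<union> supp w"
  have "bform_left G (vadd v w) e = (\<Sum>d\<in>?A. vadd v w d * bform_elem G d e)"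
    by (rule bform_left_superset) (use assms supp_vadd[of v w] in auto)
  also have "\<dots> = (\<Sum>d\<in>?A. v d * bform_elem G d e) + (\<Sum>d\<in>?A. w d * bform_elem G d e)"
    by (simp add: vadd_def distrib_right sum.distrib)
  also have "\<dots> = bform_left G v e + bform_left G w e"
  proof -
    have "bform_left G v e = (\<Sum>d\<in>?A. v d * bform_elem G d e)"
      "bform_left G w e = (\<Sum>d\<in>?A. w d * bform_elem G d e)"
      by (rule bform_left_superset; use assms in auto)+
    then show ?thesis by simp
  qed
  finally show ?thesis .
qed

lemma radical_iff_bform_left:
  "v \<in> radical G D \<longleftrightarrow> v \<in> AD D \<and> (\<forall>e\<in>D. bform_left G v e = 0)"
proof
  assume v: "v \<in> radical G D"
  have "bform_left G v e = 0" if "e \<in> D" for e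
  proof -
    have "bform G v (basis_vec e) = 0"
      using v basis_vec_AD[OF that] unfolding radical_def by blast
    then show ?thesis unfolding bform_eq_sum_bform_left supp_basis_vec by (simp add: basis_vec_def)
  qed
  then show "v \<in> AD D \<and> (\<forall>e\<in>D. bform_left G v e = 0)"
    using v by (simp add: radical_def)
next
  assume v: "v \<in> AD D \<and> (\<forall>e\<in>D. bform_left G v e = 0)"
  have "bform G v w = 0" if "w \<in> AD D" for w
    using that v unfolding bform_eq_sum_bform_left AD_def by (intro sum.neutral) auto
  then show "v \<in> radical G D" using v by (simp add: radical_def)
qed

lemma vzero_radical: "vzero \<in> radical G D"
  unfolding radical_iff_bform_left AD_def bform_left_def by simp

lemma vadd_radical:
  assumes "v \<in> radical G D" "w \<in> radical G D"
  shows "vadd v w \<in> radical G D"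
proof -
  have ad: "v \<in> AD D" "w \<in> AD D" and "\<forall>e\<in>D. bform_left G v e = 0" "\<forall>e\<in>D. bform_left G w e = 0"
    using assms unfolding radical_iff_bform_left by auto
  moreover have "finite (supp v)" "finite (supp w)" using ad by (auto simp: AD_def)
  ultimately show ?thesis unfolding radical_iff_bform_left by (simp add: vadd_AD bform_left_vadd)
qed

lemma radical_eq_AD_imp_commute:
  assumes "radical G D = AD D" "d \<in> D" "e \<in> D"
  shows "commutes G d e"
proof -
  have "basis_vec d \<in> radical G D" using assms basis_vec_AD[of d D] by simp
  then have "bform_left G (basis_vec d) e = 0" using assms(3) unfolding radical_iff_bform_left by blast
  then show ?thesis by (simp add: bform_left_basis_vec bform_elem_def split: if_splits)
qed


subsection \<open>Classes of 3-transpositions\<close>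

locale three_transposition_class = group G for G (structure) +
  fixes D
  assumes D_subset: "D \<subseteq> carrier G"
    and D_conjugacy_class: "\<exists>x\<in>carrier G. D = {g \<otimes> x \<otimes> inv g | g. g \<in> carrier G}"
    and D_involutions: "\<forall>d\<in>D. d \<noteq> \<one> \<and> d \<otimes> d = \<one>"
    and D_ord_prod: "\<forall>d\<in>D. \<forall>e\<in>D. ord (d \<otimes> e) \<in> {1, 2, 3}"
begin

lemma D_carrier: "d \<in> D \<Longrightarrow> d \<in> carrier G"
  using D_subset by auto

lemma inv_D: "d \<in> D \<Longrightarrow> inv d = d"
  using D_involutions D_carrier by (metis inv_equality)

lemma inv_mult_cancel_left: "h \<in> carrier G \<Longrightarrow> z \<in> carrier G \<Longrightarrow> inv h \<otimes> (h \<otimes> z) = z"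
  by (simp add: m_assoc[symmetric])

lemma inv_conj_conj: "g \<in> carrier G \<Longrightarrow> x \<in> carrier G \<Longrightarrow> inv g \<otimes> (g \<otimes> x \<otimes> inv g) \<otimes> g = x"
  by (simp add: m_assoc[symmetric]) (simp add: m_assoc)

lemma conj_inv_conj: "g \<in> carrier G \<Longrightarrow> x \<in> carrier G \<Longrightarrow> g \<otimes> (inv g \<otimes> x \<otimes> g) \<otimes> inv g = x"
  by (simp add: m_assoc[symmetric]) (simp add: m_assoc)

lemma conj_eq_iff:
  assumes "g \<in> carrier G" "x \<in> carrier G" "y \<in> carrier G"
  shows "x = g \<otimes> y \<otimes> inv g \<longleftrightarrow> y = inv g \<otimes> x \<otimes> g"
  using assms inv_conj_conj conj_inv_conj by metis

lemma conj_inj: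
  "g \<in> carrier G \<Longrightarrow> x \<in> carrier G \<Longrightarrow> y \<in> carrier G \<Longrightarrow> g \<otimes> x \<otimes> inv g = g \<otimes> y \<otimes> inv g \<Longrightarrow> x = y"
  by (metis inv_conj_conj)

lemma conj_mult:
  "g \<in> carrier G \<Longrightarrow> x \<in> carrier G \<Longrightarrow> y \<in> carrier G \<Longrightarrow>
   (g \<otimes> x \<otimes> inv g) \<otimes> (g \<otimes> y \<otimes> inv g) = g \<otimes> (x \<otimes> y) \<otimes> inv g"
  by (simp add: m_assoc inv_mult_cancel_left)

lemma commutes_conj_iff:
  assumes "g \<in> carrier G" "d \<in> carrier G" "e \<in> carrier G"
  shows "commutes G (g \<otimes> d \<otimes> inv g) e \<longleftrightarrow> commutes G d (inv g \<otimes> e \<otimes> g)"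
proof -
  let ?h = "inv g \<otimes> e \<otimes> g"
  have h: "?h \<in> carrier G" "e = g \<otimes> ?h \<otimes> inv g"
    using assms conj_inv_conj by auto
  have "commutes G (g \<otimes> d \<otimes> inv g) e \<longleftrightarrow> g \<otimes> (d \<otimes> ?h) \<otimes> inv g = g \<otimes> (?h \<otimes> d) \<otimes> inv g"
    unfolding commutes_def by (subst (1 2) h(2)) (simp only: conj_mult assms h(1))
  also have "\<dots> \<longleftrightarrow> d \<otimes> ?h = ?h \<otimes> d"
    using conj_inj[OF assms(1)] assms h(1) by (metis m_closed)
  finally show ?thesis by (simp add: commutes_def)
qed

lemma conj_in_D:
  assumes "g \<in> carrier G" "d \<in> D"
  shows "g \<otimes> d \<otimes> inv g \<in> D"
proof -
  obtain x where x: "x \<in> carrier G" "D = {g \<otimes> x \<otimes> inv g | g. g \<in> carrier G}"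
    using D_conjugacy_class by blast
  then obtain h where h: "h \<in> carrier G" "d = h \<otimes> x \<otimes> inv h" using assms by auto
  have "g \<otimes> d \<otimes> inv g = (g \<otimes> h) \<otimes> x \<otimes> inv (g \<otimes> h)"
    using h x assms by (simp add: inv_mult_group m_assoc)
  then show ?thesis using x h assms by auto
qed

lemma D_conjugate:
  assumes "d \<in> D" "e \<in> D"
  obtains g where "g \<in> carrier G" "e = g \<otimes> d \<otimes> inv g"
proof -
  obtain x where x: "x \<in> carrier G" "D = {g \<otimes> x \<otimes> inv g | g. g \<in> carrier G}"
    using D_conjugacy_class by blast
  then obtain h k where h: "h \<in> carrier G" "d = h \<otimes> x \<otimes> inv h"
    and k: "k \<in> carrier G" "e = k \<otimes> x \<otimes> inv k" using assms by auto
  have "(k \<otimes> inv h) \<otimes> d \<otimes> inv (k \<otimes> inv h) = e"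
    using h k x by (simp add: inv_mult_group m_assoc inv_mult_cancel_left)
  then show ?thesis using that h k by (metis inv_closed m_closed)
qed

text \<open>\<open>d e\<close> has order 3, so \<open>d e d = e d e\<close>; the orders 1 and 2 make \<open>d, e\<close> commute.\<close>
lemma braid_relation:
  assumes "d \<in> D" "e \<in> D" "\<not> commutes G d e"
  shows "inv e \<otimes> d \<otimes> e = d \<otimes> e \<otimes> inv d"
proof -
  have c: "d \<in> carrier G" "e \<in> carrier G" using assms D_carrier by auto
  have inv: "inv d = d" "inv e = e" using inv_D assms by auto
  have pow: "(d \<otimes> e) [^] ord (d \<otimes> e) = \<one>" using c by simp
  consider "ord (d \<otimes> e) = 1" | "ord (d \<otimes> e) = 2" | "ord (d \<otimes> e) = 3"
    using D_ord_prod assms by auto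
  then show ?thesis
  proof cases
    case 1
    then have "d \<otimes> e = \<one>" using pow c by simp
    then have "e = d" using c inv by (metis inv_equality)
    then show ?thesis using assms by (simp add: commutes_def)
  next
    case 2
    then have "(d \<otimes> e) \<otimes> (d \<otimes> e) = \<one>"
      using pow c by (simp add: numeral_2_eq_2 nat_pow_Suc2)
    then have "inv (d \<otimes> e) = d \<otimes> e" using c by (metis inv_equality m_closed)
    then have "commutes G d e" using c inv by (simp add: inv_mult_group commutes_def)
    then show ?thesis using assms by simp
  next
    case 3
    then have "(d \<otimes> e \<otimes> d) \<otimes> (e \<otimes> d \<otimes> e) = \<one>"
      using pow c by (simp add: numeral_3_eq_3 numeral_2_eq_2 nat_pow_Suc2 m_assoc)
    then have "inv (e \<otimes> d \<otimes> e) = d \<otimes> e \<otimes> d" using c by (metis inv_equality m_closed)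
    then have "e \<otimes> d \<otimes> e = d \<otimes> e \<otimes> d" using c inv by (simp add: inv_mult_group m_assoc)
    then show ?thesis using inv by simp
  qed
qed

lemma bprod_eq:
  assumes "d \<in> D" "e \<in> D"
  shows "bprod G d e x = bform_elem G d e * basis_vec d x + basis_vec e x
           + basis_vec (d \<otimes> e \<otimes> inv d) x"
proof (cases "commutes G d e")
  case True
  then have "d \<otimes> e \<otimes> inv d = e"
    using assms D_carrier by (simp add: commutes_def m_assoc)
  then show ?thesis using True by (simp add: bprod_def bform_elem_def vzero_def)
next
  case False
  have c: "d \<in> carrier G" "e \<in> carrier G" and inv: "inv d = d"
    using assms D_carrier inv_D by auto
  have "d \<noteq> e" using False by (auto simp: commutes_def)
  moreover have "d \<otimes> e \<otimes> inv d \<noteq> d"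
  proof
    assume "d \<otimes> e \<otimes> inv d = d"
    then have "e = inv d \<otimes> d \<otimes> d" using conj_eq_iff[OF c(1) c(1) c(2)] by simp
    then show False using \<open>d \<noteq> e\<close> c by simp
  qed
  moreover have "d \<otimes> e \<otimes> inv d \<noteq> e"
  proof
    assume e: "d \<otimes> e \<otimes> inv d = e"
    have "d \<otimes> e = (d \<otimes> e \<otimes> inv d) \<otimes> d" using c by (simp add: m_assoc)
    then have "d \<otimes> e = e \<otimes> d" using e by simp
    then show False using False by (simp add: commutes_def)
  qed
  ultimately show ?thesis using False braid_relation[OF assms False]
    by (auto simp: bprod_def bform_elem_def basis_vec_def)
qed

lemma bprod_sym:
  assumes "d \<in> D" "e \<in> D"
  shows "bprod G d e = bprod G e d"
proof (cases "commutes G d e")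
  case True
  then show ?thesis by (simp add: bprod_def commutes_def)
next
  case False
  then have "\<not> commutes G e d" by (auto simp: commutes_def)
  then have "inv e \<otimes> d \<otimes> e = inv d \<otimes> e \<otimes> d"
    using braid_relation assms False inv_D by metis
  then show ?thesis using False \<open>\<not> commutes G e d\<close> by (auto simp: bprod_def)
qed

lemma amult_commute:
  assumes "v \<in> AD D" "w \<in> AD D"
  shows "amult G v w = amult G w v"
proof
  fix x
  have "amult G v w x = (\<Sum>e\<in>supp w. \<Sum>d\<in>supp v. v d * w e * bprod G d e x)"
    unfolding amult_def by (rule sum.swap)
  also have "\<dots> = (\<Sum>e\<in>supp w. \<Sum>d\<in>supp v. w e * v d * bprod G e d x)"
  proof (intro sum.cong refl)
    fix e d assume "e \<in> supp w" "d \<in> supp v"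
    then have "bprod G d e = bprod G e d" using assms bprod_sym by (auto simp: AD_def)
    then show "v d * w e * bprod G d e x = w e * v d * bprod G e d x" by (simp add: mult_ac)
  qed
  finally show "amult G v w x = amult G w v x" by (simp add: amult_def)
qed


subsection \<open>The conjugation action\<close>

lemma act_apply: "g \<in> carrier G \<Longrightarrow> x \<in> carrier G \<Longrightarrow> act G g v x = v (inv g \<otimes> x \<otimes> g)"
  by (simp add: act_def)

lemma supp_act:
  assumes "g \<in> carrier G" "v \<in> AD D"
  shows "supp (act G g v) = (\<lambda>d. g \<otimes> d \<otimes> inv g) ` supp v"
proof (intro equalityI subsetI)
  fix x assume "x \<in> supp (act G g v)"
  then have x: "x \<in> carrier G" "inv g \<otimes> x \<otimes> g \<in> supp v"
    by (auto simp: act_def supp_def split: if_splits)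
  then show "x \<in> (\<lambda>d. g \<otimes> d \<otimes> inv g) ` supp v"
    using conj_inv_conj[OF assms(1) x(1)] by (metis image_eqI)
next
  fix x assume "x \<in> (\<lambda>d. g \<otimes> d \<otimes> inv g) ` supp v"
  then obtain d where d: "d \<in> supp v" "x = g \<otimes> d \<otimes> inv g" by auto
  then have "d \<in> carrier G" using assms D_subset by (auto simp: AD_def)
  then show "x \<in> supp (act G g v)"
    using d assms inv_conj_conj by (auto simp: act_def supp_def)
qed

lemma act_AD:
  assumes "g \<in> carrier G" "v \<in> AD D"
  shows "act G g v \<in> AD D"
  using supp_act[OF assms] assms conj_in_D by (auto simp: AD_def)

lemma act_basis_vec:
  assumes "g \<in> carrier G" "a \<in> carrier G"
  shows "act G g (basis_vec a) = basis_vec (g \<otimes> a \<otimes> inv g)"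
proof
  fix x
  show "act G g (basis_vec a) x = basis_vec (g \<otimes> a \<otimes> inv g) x"
  proof (cases "x \<in> carrier G")
    case True
    then show ?thesis
      using conj_eq_iff[OF assms(1) True assms(2)] by (auto simp: act_def basis_vec_def)
  next
    case False
    then have "x \<noteq> g \<otimes> a \<otimes> inv g" using assms by auto
    then show ?thesis using False by (simp add: act_def basis_vec_def)
  qed
qed

lemma bform_left_act:
  assumes "g \<in> carrier G" "v \<in> AD D" "e \<in> carrier G"
  shows "bform_left G (act G g v) e = bform_left G v (inv g \<otimes> e \<otimes> g)"
proof -
  have sv: "supp v \<subseteq> carrier G" using assms D_subset by (auto simp: AD_def)
  have inj: "inj_on (\<lambda>d. g \<otimes> d \<otimes> inv g) (supp v)"
    using conj_inj[OF assms(1)] sv by (auto simp: inj_on_def)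
  have "bform_left G (act G g v) e
      = (\<Sum>d\<in>supp v. act G g v (g \<otimes> d \<otimes> inv g) * bform_elem G (g \<otimes> d \<otimes> inv g) e)"
    unfolding bform_left_def supp_act[OF assms(1,2)] sum.reindex[OF inj] by simp
  also have "\<dots> = bform_left G v (inv g \<otimes> e \<otimes> g)"
    unfolding bform_left_def
  proof (intro sum.cong refl)
    fix d assume "d \<in> supp v"
    then have d: "d \<in> carrier G" using sv by auto
    show "act G g v (g \<otimes> d \<otimes> inv g) * bform_elem G (g \<otimes> d \<otimes> inv g) e
        = v d * bform_elem G d (inv g \<otimes> e \<otimes> g)"
      using d assms inv_conj_conj commutes_conj_iff[OF assms(1) d assms(3)]
      by (simp add: act_apply bform_elem_def)
  qed
  finally show ?thesis .
qed

lemma sum_basis_vec_conj: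
  assumes "v \<in> AD D" "d \<in> D"
  shows "(\<Sum>f\<in>supp v. basis_vec (d \<otimes> f \<otimes> inv d) x) = act G d v x"
proof (cases "x \<in> carrier G")
  case True
  have dc: "d \<in> carrier G" using assms D_carrier by auto
  have "(\<Sum>f\<in>supp v. basis_vec (d \<otimes> f \<otimes> inv d) x)
      = (\<Sum>f\<in>supp v. if inv d \<otimes> x \<otimes> d = f then 1 else 0)"
  proof (intro sum.cong refl)
    fix f assume "f \<in> supp v"
    then have "f \<in> carrier G" using assms D_subset by (auto simp: AD_def)
    then show "basis_vec (d \<otimes> f \<otimes> inv d) x = (if inv d \<otimes> x \<otimes> d = f then 1 else 0)"
      using conj_eq_iff[OF dc True] by (auto simp: basis_vec_def)
  qed
  also have "\<dots> = v (inv d \<otimes> x \<otimes> d)" using assms by (auto simp: AD_def sum.delta supp_def)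
  finally show ?thesis using True dc by (simp add: act_apply)
next
  case False
  then have "basis_vec (d \<otimes> f \<otimes> inv d) x = 0" if "f \<in> supp v" for f
    using that assms D_subset D_carrier by (auto simp: AD_def basis_vec_def)
  then show ?thesis using False by (simp add: act_def)
qed

lemma amult_basis_vec_D:
  assumes "d \<in> D" "v \<in> AD D"
  shows "amult G (basis_vec d) v = (\<lambda>x. bform_left G v d * basis_vec d x + v x + act G d v x)"
proof
  fix x
  have sv: "finite (supp v)" "supp v \<subseteq> D" using assms by (auto simp: AD_def)
  have "amult G (basis_vec d) v x = (\<Sum>f\<in>supp v.
          bform_elem G d f * basis_vec d x + basis_vec f x + basis_vec (d \<otimes> f \<otimes> inv d) x)"
    unfolding amult_basis_vec_left
    using sv assms by (intro sum.cong refl) (auto simp: in_supp_eq_1 bprod_eq)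
  also have "\<dots> = (\<Sum>f\<in>supp v. bform_elem G d f) * basis_vec d x + (\<Sum>f\<in>supp v. basis_vec f x)
       + (\<Sum>f\<in>supp v. basis_vec (d \<otimes> f \<otimes> inv d) x)"
    by (simp add: sum.distrib sum_distrib_right)
  also have "(\<Sum>f\<in>supp v. bform_elem G d f) = bform_left G v d"
    unfolding bform_left_def by (intro sum.cong refl) (auto simp: in_supp_eq_1 bform_elem_sym)
  finally show "amult G (basis_vec d) v x = bform_left G v d * basis_vec d x + v x + act G d v x"
    using sum_basis_vec_supp[OF sv(1)] sum_basis_vec_conj[OF assms(2,1)] by simp
qed


subsection \<open>Invariant ideals and the radical\<close>

lemma act_radical:
  assumes "g \<in> carrier G" "v \<in> radical G D"
  shows "act G g v \<in> radical G D"
proof -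
  have v: "v \<in> AD D" "\<forall>e\<in>D. bform_left G v e = 0"
    using assms unfolding radical_iff_bform_left by auto
  have "bform_left G (act G g v) e = 0" if "e \<in> D" for e
  proof -
    have "inv g \<otimes> e \<otimes> g \<in> D" using conj_in_D[of "inv g" e] that assms by simp
    then show ?thesis using bform_left_act[OF assms(1) v(1)] that D_carrier v by simp
  qed
  then show ?thesis using act_AD[OF assms(1) v(1)] by (simp add: radical_iff_bform_left)
qed

lemma amult_radical:
  assumes "v \<in> radical G D" "w \<in> AD D"
  shows "amult G w v \<in> radical G D"
proof -
  have v: "v \<in> AD D" "\<forall>e\<in>D. bform_left G v e = 0"
    using assms unfolding radical_iff_bform_left by auto
  have w: "supp w \<subseteq> D" "finite (supp w)" using assms by (auto simp: AD_def)
  have basis: "amult G (basis_vec e) v = vadd v (act G e v)" if "e \<in> D" for e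
    using amult_basis_vec_D[OF that v(1)] v(2) that by (simp add: vadd_def)
  have "amult G w v = (\<lambda>x. \<Sum>e\<in>supp w. vadd v (act G e v) x)"
  proof
    fix x
    have "amult G w v x = (\<Sum>e\<in>supp w. w e * amult G (basis_vec e) v x)"
      by (rule amult_expand_left)
    also have "\<dots> = (\<Sum>e\<in>supp w. vadd v (act G e v) x)"
      using w basis by (intro sum.cong refl) (auto simp: in_supp_eq_1)
    finally show "amult G w v x = (\<Sum>e\<in>supp w. vadd v (act G e v) x)" .
  qed
  also have "\<dots> \<in> radical G D"
    using w D_carrier assms(1)
    by (intro sum_vectors_closed vzero_radical vadd_radical act_radical) auto
  finally show ?thesis .
qed

lemma is_ideal_radical: "is_ideal G D (radical G D)"
  unfolding is_ideal_def
proof (intro conjI ballI)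
  show "radical G D \<subseteq> AD D" by (auto simp: radical_def)
  show "vzero \<in> radical G D" by (rule vzero_radical)
  fix v assume v: "v \<in> radical G D"
  then show "vadd v w \<in> radical G D" if "w \<in> radical G D" for w
    using that by (rule vadd_radical)
  fix w assume w: "w \<in> AD D"
  show "amult G w v \<in> radical G D" using amult_radical[OF v w] .
  then show "amult G v w \<in> radical G D"
    using amult_commute[OF _ w] v by (simp add: radical_def)
qed

text \<open>Over \<open>\<bbbF>\<^sub>2\<close> the formula for \<open>d * v\<close> can be solved for \<open>d\<close> once \<open>\<langle>v,d\<rangle> = 1\<close>.\<close>
lemma basis_vec_in_invariant_ideal:
  assumes "is_ideal G D I" "G_invariant G I" "v \<in> I" "d \<in> D" "bform_left G v d = 1"
  shows "basis_vec d \<in> I"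
proof -
  have v: "v \<in> AD D" using assms by (auto simp: is_ideal_def)
  have "basis_vec d = vadd (vadd (amult G (basis_vec d) v) v) (act G d v)"
    by (rule ext) (simp add: amult_basis_vec_D[OF assms(4) v] assms(5) vadd_def add.assoc)
  also have "\<dots> \<in> I"
    using assms D_carrier basis_vec_AD[OF assms(4)] by (simp add: is_ideal_def G_invariant_def)
  finally show ?thesis .
qed

lemma invariant_ideal_eq_AD:
  assumes "is_ideal G D I" "G_invariant G I" "d \<in> D" "basis_vec d \<in> I"
  shows "I = AD D"
proof -
  have "basis_vec e \<in> I" if e: "e \<in> D" for e
  proof -
    obtain g where g: "g \<in> carrier G" "e = g \<otimes> d \<otimes> inv g"
      using D_conjugate[OF assms(3) e] by blast
    have "act G g (basis_vec d) \<in> I" using assms(2,4) g(1) by (simp add: G_invariant_def)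
    then show ?thesis using g act_basis_vec[OF g(1) D_carrier[OF assms(3)]] by simp
  qed
  then have "AD D \<subseteq> I"
    using assms(1) by (intro AD_subset_if_basis_vecs) (auto simp: is_ideal_def)
  then show ?thesis using assms(1) by (auto simp: is_ideal_def)
qed

lemma proper_invariant_ideal_subset_radical:
  assumes "is_ideal G D I" "G_invariant G I" "I \<noteq> AD D"
  shows "I \<subseteq> radical G D"
proof
  fix v assume v: "v \<in> I"
  have "bform_left G v d = 0" if d: "d \<in> D" for d
  proof (rule ccontr)
    assume "bform_left G v d \<noteq> 0"
    then have "basis_vec d \<in> I" using basis_vec_in_invariant_ideal assms(1,2) v d by simp
    then show False using invariant_ideal_eq_AD assms d by blast
  qed
  then show "v \<in> radical G D"
    using assms(1) v by (auto simp: is_ideal_def radical_iff_bform_left)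
qed

end

theorem proposition2p7:
  fixes G :: "('g, 'b) monoid_scheme" and D :: "'g set" and I :: "('g \<Rightarrow> bit) set"
  assumes "group G"
    and "D \<subseteq> carrier G"
    and "\<exists>x\<in>carrier G. D = {g \<otimes>\<^bsub>G\<^esub> x \<otimes>\<^bsub>G\<^esub> inv\<^bsub>G\<^esub> g | g. g \<in> carrier G}"
    and "generate G D = carrier G"
    and "\<forall>d\<in>D. d \<noteq> \<one>\<^bsub>G\<^esub> \<and> d \<otimes>\<^bsub>G\<^esub> d = \<one>\<^bsub>G\<^esub>"
    and "\<forall>d\<in>D. \<forall>e\<in>D. group.ord G (d \<otimes>\<^bsub>G\<^esub> e) \<in> {1, 2, 3}"
    and "simple_quotient G D I"
    and "G_invariant G I"
  shows "quot_iso G D I (radical G D)"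
proof -
  interpret three_transposition_class G D
    unfolding three_transposition_class_def three_transposition_class_axioms_def
    using assms(1,2,3,5,6) by (intro conjI)
  obtain v w where vw: "v \<in> AD D" "w \<in> AD D" "amult G v w \<notin> I"
    using assms(7) by (auto simp: simple_quotient_def)
  have I: "is_ideal G D I" using assms(7) by (simp add: simple_quotient_def)
  then have "amult G v w \<noteq> vzero" using vw by (auto simp: is_ideal_def)
  then have "radical G D \<noteq> AD D"
    using vw amult_eq_vzero_if_all_commute radical_eq_AD_imp_commute by metis
  moreover have "I \<subseteq> radical G D"
    using I vw assms(8) by (intro proper_invariant_ideal_subset_radical) (auto simp: is_ideal_def)
  ultimately have "radical G D = I"
    using assms(7) is_ideal_radical by (auto simp: simple_quotient_def)
  then show ?thesis using I by (simp add: is_ideal_def quot_iso_refl)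
qed

end
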